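(* For every integer $n\ge1$: $$\beta(n)^2=\sum_{dk=n}d\,2^{\omega(d)}\lambda(d)\,\sigma_2(k),\qquad \beta(n^2)=\sum_{dk=n}d\,\mu(d)\,\sigma_2(k),\qquad \beta(n)\sigma(n)=\sum_{d^2k=n}d^2\,2^{\omega(d)}\beta_2(k),$$ where the sums run over pairs of positive integers $(d,k)$ with the indicated product equal to $n$.
   Context: $\lambda$ is the Liouville function, $\mu$ the Möbius function, $\omega(n)$ the number of distinct prime factors of $n$. $\beta(n)=\sum_{d\mid n}d\,\lambda(n/d)$, $\beta_2(n)=\sum_{d\mid n}d^2\lambda(n/d)$, $\sigma(n)=\sum_{d\mid n}d$, $\sigma_2(n)=\sum_{d\mid n}d^2$. *)

theory Defs
  imports "HOL-Computational_Algebra.Computational_Algebra"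
begin

definition liouville :: "nat \<Rightarrow> int" where
  "liouville n = (-1) ^ size (prime_factorization n)"

definition moebius :: "nat \<Rightarrow> int" where
  "moebius n = (if squarefree n then (-1) ^ card (prime_factors n) else 0)"

definition omega :: "nat \<Rightarrow> nat" where
  "omega n = card (prime_factors n)"

definition beta :: "nat \<Rightarrow> int" where
  "beta n = (\<Sum>d | d dvd n. int d * liouville (n div d))"

definition beta2 :: "nat \<Rightarrow> int" where
  "beta2 n = (\<Sum>d | d dvd n. int d ^ 2 * liouville (n div d))"

definition sigma1 :: "nat \<Rightarrow> int" where
  "sigma1 n = (\<Sum>d | d dvd n. int d)"

definition sigma2 :: "nat \<Rightarrow> int" where
  "sigma2 n = (\<Sum>d | d dvd n. int d ^ 2)"

end

theory Submission
  imports Defs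
begin

(*
  Proof strategy.  Every function occurring in the three identities is multiplicative, so each
  identity reduces to prime powers n = p^k, where it becomes a polynomial identity in x = p.

  At p^k the functions beta, beta2, sigma1,
  sigma2 are alternating resp. geometric sums of powers of p or p^2.  Their closed forms
  (y + 1) * alt_sum y k = y^(k+1) + (-1)^k  and  (y - 1) * geom_sum y k = y^(k+1) - 1
  turn the needed recurrences into polynomial identities once the nonzero factors y + 1, y - 1
  are cleared; induction on k then yields the prime-power cases of the three identities.
*)

definition multiplicative :: "(nat \<Rightarrow> 'a :: comm_semiring_1) \<Rightarrow> bool" where
  "multiplicative f \<longleftrightarrow>
     f 1 = 1 \<and> (\<forall>a b. a > 0 \<longrightarrow> b > 0 \<longrightarrow> coprime a b \<longrightarrow> f (a * b) = f a * f b)"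

lemma multiplicativeD:
  "multiplicative f \<Longrightarrow> a > 0 \<Longrightarrow> b > 0 \<Longrightarrow> coprime a b \<Longrightarrow> f (a * b) = f a * f b"
  unfolding multiplicative_def by blast

lemma multiplicative_1: "multiplicative f \<Longrightarrow> f 1 = 1"
  unfolding multiplicative_def by blast

definition dconv :: "nat \<Rightarrow> (nat \<Rightarrow> 'a :: comm_semiring_1) \<Rightarrow> (nat \<Rightarrow> 'a) \<Rightarrow> nat \<Rightarrow> 'a" where
  "dconv j f g n = (\<Sum>d | d ^ j dvd n. f d * g (n div d ^ j))"

lemma power_dvd_imp_dvd: "j > 0 \<Longrightarrow> (d::nat) ^ j dvd n \<Longrightarrow> d dvd n"
  by (meson dvd_power dvd_trans)

lemma power_divisors_coprime_mult:
  fixes a b :: nat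
  assumes ab: "coprime a b" and j: "j > 0"
  shows "bij_betw (\<lambda>(x, y). x * y) ({d. d ^ j dvd a} \<times> {d. d ^ j dvd b}) {d. d ^ j dvd a * b}"
proof (rule bij_betw_imageI)
  have gcd_left: "gcd (x * y) a = x" and gcd_right: "gcd (x * y) b = y"
    if "x dvd a" "y dvd b" for x y
  proof -
    have "coprime a y" "coprime b x"
      using coprime_divisors[OF dvd_refl that(2) ab] coprime_divisors[OF that(1) dvd_refl ab]
      by (simp_all add: ac_simps)
    then show "gcd (x * y) a = x" "gcd (x * y) b = y"
      using that by (simp_all add: gcd_mult_left_right_cancel gcd_mult_left_left_cancel
          gcd_nat.absorb1)
  qed
  show "inj_on (\<lambda>(x, y). x * y) ({d. d ^ j dvd a} \<times> {d. d ^ j dvd b})"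
  proof (intro inj_onI, clarsimp)
    fix x y x' y' assume "x * y = x' * y'" "x ^ j dvd a" "y ^ j dvd b" "x' ^ j dvd a" "y' ^ j dvd b"
    then show "x = x' \<and> y = y'"
      using gcd_left gcd_right power_dvd_imp_dvd[OF j] by metis
  qed
  show "(\<lambda>(x, y). x * y) ` ({d. d ^ j dvd a} \<times> {d. d ^ j dvd b}) = {d. d ^ j dvd a * b}"
  proof (intro equalityI subsetI)
    fix d assume "d \<in> {d. d ^ j dvd a * b}"
    then have dj: "d ^ j dvd a * b" by simp
    obtain x y where d: "d = x * y" and "x dvd a" "y dvd b"
      using dvd_productE[OF power_dvd_imp_dvd[OF j dj]] .
    then have "coprime (x ^ j) b" "coprime (y ^ j) a"
      using ab coprime_divisors by (auto simp: ac_simps)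
    moreover have "x ^ j dvd a * b" "y ^ j dvd a * b"
      using dj dvd_mult_left dvd_mult_right by (auto simp: d power_mult_distrib)
    ultimately have "x ^ j dvd a" "y ^ j dvd b"
      by (simp_all add: coprime_dvd_mult_left_iff coprime_dvd_mult_right_iff)
    then show "d \<in> (\<lambda>(x, y). x * y) ` ({d. d ^ j dvd a} \<times> {d. d ^ j dvd b})"
      using d by auto
  qed (auto simp: power_mult_distrib mult_dvd_mono)
qed

lemma dconv_multiplicative:
  assumes j: "j > 0" and f: "multiplicative f" and g: "multiplicative g"
  shows "multiplicative (dconv j f g)"
  unfolding multiplicative_def
proof (intro conjI allI impI)
  have "{d::nat. d ^ j dvd 1} = {1}" using j by auto
  then show "dconv j f g 1 = 1"
    using multiplicative_1[OF f] multiplicative_1[OF g] by (simp add: dconv_def)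
next
  fix a b :: nat assume a: "a > 0" and b: "b > 0" and ab: "coprime a b"
  define A B where "A = {d. d ^ j dvd a}" and "B = {d. d ^ j dvd b}"
  have factor: "f (x * y) * g (a * b div (x * y) ^ j) =
      (f x * g (a div x ^ j)) * (f y * g (b div y ^ j))" if "x \<in> A" "y \<in> B" for x y
  proof -
    have xa: "x ^ j dvd a" and yb: "y ^ j dvd b" using that by (auto simp: A_def B_def)
    then have "x dvd a" "y dvd b" using power_dvd_imp_dvd[OF j] by blast+
    then have "x > 0" "y > 0" "coprime x y"
      using a b coprime_divisors[OF _ _ ab] by (auto intro!: gr0I)
    moreover have "a div x ^ j > 0" "b div y ^ j > 0" "coprime (a div x ^ j) (b div y ^ j)"
      using xa yb a b coprime_divisors[OF _ _ ab] by (auto intro!: gr0I elim!: dvdE)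
    moreover have "a * b div (x * y) ^ j = (a div x ^ j) * (b div y ^ j)"
      using xa yb by (simp add: power_mult_distrib div_mult_div_if_dvd)
    ultimately show ?thesis
      using multiplicativeD[OF f] multiplicativeD[OF g] by (simp add: ac_simps)
  qed
  have "dconv j f g (a * b) = (\<Sum>(x, y)\<in>A \<times> B. f (x * y) * g (a * b div (x * y) ^ j))"
    unfolding dconv_def A_def B_def
    by (subst sum.reindex_bij_betw[OF power_divisors_coprime_mult[OF ab j], symmetric])
       (simp add: case_prod_unfold)
  also have "\<dots> = (\<Sum>(x, y)\<in>A \<times> B. (f x * g (a div x ^ j)) * (f y * g (b div y ^ j)))"
    using factor by (intro sum.cong) auto
  also have "\<dots> = dconv j f g a * dconv j f g b"
    by (simp add: dconv_def A_def B_def sum_product sum.cartesian_product)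
  finally show "dconv j f g (a * b) = dconv j f g a * dconv j f g b" .
qed

lemma multiplicative_eqI:
  assumes f: "multiplicative f" and g: "multiplicative g"
    and prime_powers: "\<And>p k. prime p \<Longrightarrow> k > 0 \<Longrightarrow> f (p ^ k) = g (p ^ k)"
    and n: "n > 0"
  shows "f n = g n"
  using n
proof (induction n rule: less_induct)
  case (less n)
  show ?case
  proof (cases "n = 1")
    case True
    then show ?thesis using multiplicative_1[OF f] multiplicative_1[OF g] by simp
  next
    case False
    then obtain p where p: "prime p" "p dvd n" using less.prems prime_factor_nat[of n] by auto
    define k where "k = multiplicity p n"
    obtain m where nm: "n = p ^ k * m" and "\<not> p dvd m"
      using multiplicity_decompose'[of n p] less.prems p(1) not_prime_unit unfolding k_def by blast
    then have m: "m > 0" "coprime (p ^ k) m"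
      using less.prems p by (auto intro!: gr0I simp: prime_imp_coprime)
    have "k > 0" using p less.prems by (simp add: k_def prime_multiplicity_gt_zero_iff)
    then have "p ^ k > 1" using one_less_power[OF prime_gt_1_nat[OF p(1)]] by blast
    then have "m < n" and pk: "p ^ k > 0" using nm m by (simp, linarith)
    have "f n = f (p ^ k) * f m"
      unfolding nm by (rule multiplicativeD[OF f pk m])
    also have "\<dots> = g (p ^ k) * g m"
      using prime_powers[OF p(1) \<open>k > 0\<close>] less.IH[OF \<open>m < n\<close> m(1)] by simp
    also have "\<dots> = g n"
      unfolding nm by (rule multiplicativeD[OF g pk m, symmetric])
    finally show ?thesis .
  qed
qed

lemma power_divisors_prime_power:
  fixes p :: nat
  assumes p: "prime p" and j: "j > 0"
  shows "{d. d ^ j dvd p ^ k} = (\<lambda>i. p ^ i) ` {..k div j}"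
proof -
  have "d ^ j dvd p ^ k \<longleftrightarrow> (\<exists>i\<le>k div j. d = p ^ i)" for d
  proof
    assume dj: "d ^ j dvd p ^ k"
    then obtain i where "i \<le> k" "d = p ^ i"
      using power_dvd_imp_dvd[OF j] divides_primepow_nat[OF p] by blast
    moreover have "i * j \<le> k"
      using dj \<open>d = p ^ i\<close> prime_gt_1_nat[OF p] by (simp add: power_mult[symmetric] power_dvd_imp_le)
    ultimately show "\<exists>i\<le>k div j. d = p ^ i"
      using j by (auto simp: less_eq_div_iff_mult_less_eq)
  next
    assume "\<exists>i\<le>k div j. d = p ^ i"
    then show "d ^ j dvd p ^ k"
      using j by (auto simp: less_eq_div_iff_mult_less_eq power_mult[symmetric] le_imp_power_dvd)
  qed
  then show ?thesis by auto
qed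

lemma dconv_prime_power:
  fixes p :: nat
  assumes p: "prime p" and j: "j > 0"
  shows "dconv j f g (p ^ k) = (\<Sum>i\<le>k div j. f (p ^ i) * g (p ^ (k - j * i)))"
proof -
  have "inj_on (\<lambda>i. p ^ i) {..k div j}"
    using prime_gt_1_nat[OF p] by (intro inj_onI) simp
  moreover have "p ^ k div (p ^ i) ^ j = p ^ (k - j * i)" if "i \<le> k div j" for i
    using that j p by (simp add: less_eq_div_iff_mult_less_eq power_mult[symmetric] mult.commute
        power_diff prime_gt_0_nat)
  ultimately show ?thesis
    unfolding dconv_def power_divisors_prime_power[OF p j] by (simp add: sum.reindex)
qed

lemma multiplicative_of_nat: "multiplicative of_nat"
  by (simp add: multiplicative_def)

lemma multiplicative_of_nat_power: "multiplicative (\<lambda>n. of_nat n ^ e)"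
  by (simp add: multiplicative_def power_mult_distrib)

lemma multiplicative_const_1: "multiplicative (\<lambda>n. 1)"
  by (simp add: multiplicative_def)

lemma multiplicative_mult:
  "multiplicative f \<Longrightarrow> multiplicative g \<Longrightarrow> multiplicative (\<lambda>n. f n * g n)"
  unfolding multiplicative_def by (auto simp: ac_simps)

lemma multiplicative_compose_power:
  "multiplicative f \<Longrightarrow> multiplicative (\<lambda>n. f (n ^ e))"
  unfolding multiplicative_def by (auto simp: power_mult_distrib)

lemma prime_factors_disjoint_coprime:
  "coprime (a::nat) b \<Longrightarrow> prime_factors a \<inter> prime_factors b = {}"
  by (auto simp: in_prime_factors_iff dest: coprime_common_divisor not_prime_unit)

lemma card_prime_factors_mult:
  fixes a b :: nat
  assumes "a > 0" "b > 0" "coprime a b"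
  shows "card (prime_factors (a * b)) = card (prime_factors a) + card (prime_factors b)"
  using assms prime_factors_disjoint_coprime[OF assms(3)]
  by (simp add: prime_factors_product card_Un_disjoint)

lemma multiplicative_liouville: "multiplicative liouville"
  by (auto simp: multiplicative_def liouville_def prime_factorization_mult power_add)

lemma multiplicative_moebius: "multiplicative moebius"
  unfolding multiplicative_def
proof (intro conjI allI impI)
  fix a b :: nat assume ab: "a > 0" "b > 0" "coprime a b"
  then have "squarefree (a * b) \<longleftrightarrow> squarefree a \<and> squarefree b"
    using squarefree_multD squarefree_mult_coprime by blast
  then show "moebius (a * b) = moebius a * moebius b"
    using card_prime_factors_mult[OF ab] by (simp add: moebius_def power_add)
qed (simp add: moebius_def)

lemma multiplicative_power_omega: "multiplicative (\<lambda>n. c ^ omega n)"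
  by (auto simp: multiplicative_def omega_def card_prime_factors_mult power_add)

definition alt_sum :: "'a :: comm_ring_1 \<Rightarrow> nat \<Rightarrow> 'a" where
  "alt_sum y k = (\<Sum>i\<le>k. y ^ i * (-1) ^ (k - i))"

definition geom_sum :: "'a :: comm_ring_1 \<Rightarrow> nat \<Rightarrow> 'a" where
  "geom_sum y k = (\<Sum>i\<le>k. y ^ i)"

lemma alt_sum_Suc: "alt_sum y (Suc k) = y ^ Suc k - alt_sum y k"
proof -
  have "(\<Sum>i\<le>k. y ^ i * (-1) ^ (Suc k - i)) = - (\<Sum>i\<le>k. y ^ i * (-1) ^ (k - i))"
    by (simp add: sum_negf[symmetric] Suc_diff_le)
  then show ?thesis by (simp add: alt_sum_def)
qed

lemma geom_sum_Suc: "geom_sum y (Suc k) = geom_sum y k + y ^ Suc k"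
  by (simp add: geom_sum_def)

(* Closed forms; they let us verify identities after multiplying by y + 1 or y - 1. *)
lemma alt_sum_closed_form: "(y + 1) * alt_sum y k = y ^ Suc k + (-1) ^ k"
proof (induction k)
  case (Suc k)
  then show ?case by (simp add: alt_sum_Suc algebra_simps)
qed (simp add: alt_sum_def)

lemma geom_sum_closed_form: "(y - 1) * geom_sum y k = y ^ Suc k - 1"
proof (induction k)
  case (Suc k)
  then show ?case by (simp add: geom_sum_Suc algebra_simps)
qed (simp add: geom_sum_def)

lemma square_ne_one_factors:
  fixes x :: "'a :: idom"
  assumes "x ^ 2 \<noteq> 1"
  shows "x + 1 \<noteq> 0" "x - 1 \<noteq> 0" "x ^ 2 - 1 \<noteq> 0"
proof -
  have "x ^ 2 - 1 = (x + 1) * (x - 1)" by (simp add: power2_eq_square algebra_simps)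
  then show "x + 1 \<noteq> 0" "x - 1 \<noteq> 0" "x ^ 2 - 1 \<noteq> 0" using assms by auto
qed

lemma power_square_commute: "((x :: 'a :: monoid_mult) ^ 2) ^ n = (x ^ n) ^ 2"
  by (simp only: power_mult[symmetric] mult.commute)

lemma alt_sum_Suc_square:
  fixes x :: "'a :: idom"
  assumes x: "x ^ 2 \<noteq> 1"
  shows "alt_sum x (Suc k) ^ 2 =
    geom_sum (x ^ 2) (Suc k) - x * geom_sum (x ^ 2) k - x * alt_sum x k ^ 2"
proof -
  define y s where "y = x ^ Suc k" and "s = (-1 :: 'a) ^ k"
  have s: "s ^ 2 = 1" by (simp add: s_def power_square_commute[symmetric])
  have A: "(x + 1) * alt_sum x k = y + s"
    using alt_sum_closed_form by (simp add: y_def s_def)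
  have A': "alt_sum x (Suc k) = y - alt_sum x k"
    by (simp add: alt_sum_Suc y_def)
  have G: "(x ^ 2 - 1) * geom_sum (x ^ 2) k = y ^ 2 - 1"
    using geom_sum_closed_form[of "x ^ 2" k] unfolding power_square_commute y_def .
  have G': "(x ^ 2 - 1) * geom_sum (x ^ 2) (Suc k) = x ^ 2 * y ^ 2 - 1"
    using geom_sum_closed_form[of "x ^ 2" "Suc k"]
    unfolding power_Suc[of "x ^ 2" "Suc k"] unfolding power_square_commute y_def .
  have "(x + 1) ^ 2 * (x ^ 2 - 1) * (alt_sum x (Suc k) ^ 2 -
      (geom_sum (x ^ 2) (Suc k) - x * geom_sum (x ^ 2) k - x * alt_sum x k ^ 2)) = 0"
    unfolding A' using A G G' s by algebra
  then show ?thesis using square_ne_one_factors[OF x] by simp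
qed

lemma alt_sum_even:
  fixes x :: "'a :: idom"
  assumes x: "x ^ 2 \<noteq> 1"
  shows "alt_sum x (2 * Suc m) = geom_sum (x ^ 2) (Suc m) - x * geom_sum (x ^ 2) m"
proof -
  define z where "z = (x ^ 2) ^ Suc m"
  have A: "(x + 1) * alt_sum x (2 * Suc m) = x * z + 1"
    using alt_sum_closed_form[of x "2 * Suc m"] by (simp add: z_def power_mult power2_eq_square)
  have G: "(x ^ 2 - 1) * geom_sum (x ^ 2) m = z - 1"
    using geom_sum_closed_form[of "x ^ 2" m] by (simp only: z_def)
  have G': "(x ^ 2 - 1) * geom_sum (x ^ 2) (Suc m) = x ^ 2 * z - 1"
    using geom_sum_closed_form[of "x ^ 2" "Suc m"] by (simp only: z_def power_Suc)
  have "(x + 1) * (x ^ 2 - 1) *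
      (alt_sum x (2 * Suc m) - (geom_sum (x ^ 2) (Suc m) - x * geom_sum (x ^ 2) m)) = 0"
    using A G G' by algebra
  then show ?thesis using square_ne_one_factors[OF x] by simp
qed

lemma alt_sum_times_geom_sum:
  fixes x :: "'a :: idom"
  assumes x: "x ^ 2 \<noteq> 1" "x ^ 2 \<noteq> -1"
  shows "alt_sum x (Suc (Suc k)) * geom_sum x (Suc (Suc k)) =
    alt_sum (x ^ 2) (Suc (Suc k)) + x ^ 2 * alt_sum (x ^ 2) k + x ^ 2 * (alt_sum x k * geom_sum x k)"
proof -
  define y s where "y = x ^ Suc k" and "s = (-1 :: 'a) ^ k"
  have A: "(x + 1) * alt_sum x k = y + s"
    and A': "(x + 1) * alt_sum x (Suc (Suc k)) = x ^ 2 * y + s"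
    using alt_sum_closed_form[of x k] alt_sum_closed_form[of x "Suc (Suc k)"]
    by (simp_all add: y_def s_def power2_eq_square)
  have G: "(x - 1) * geom_sum x k = y - 1"
    and G': "(x - 1) * geom_sum x (Suc (Suc k)) = x ^ 2 * y - 1"
    using geom_sum_closed_form[of x k] geom_sum_closed_form[of x "Suc (Suc k)"]
    by (simp_all add: y_def power2_eq_square)
  have B: "(x ^ 2 + 1) * alt_sum (x ^ 2) k = y ^ 2 + s"
    and B': "(x ^ 2 + 1) * alt_sum (x ^ 2) (Suc (Suc k)) = x ^ 2 * x ^ 2 * y ^ 2 + s"
    using alt_sum_closed_form[of "x ^ 2" k] alt_sum_closed_form[of "x ^ 2" "Suc (Suc k)"]
    by (simp_all add: y_def s_def power_square_commute power_mult_distrib)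
  have "x ^ 2 + 1 \<noteq> 0" using x(2) by (simp add: eq_neg_iff_add_eq_0)
  then have nz: "(x + 1) * (x - 1) * (x ^ 2 + 1) \<noteq> 0" using square_ne_one_factors[OF x(1)] by simp
  have "(x + 1) * (x - 1) * (x ^ 2 + 1) * (alt_sum x (Suc (Suc k)) * geom_sum x (Suc (Suc k)) -
      (alt_sum (x ^ 2) (Suc (Suc k)) + x ^ 2 * alt_sum (x ^ 2) k +
       x ^ 2 * (alt_sum x k * geom_sum x k))) = 0"
    using A A' G G' B B' by algebra
  then show ?thesis using nz by simp
qed

(* The weight 1, 2, 2, ... is 2^omega (p^i); peeling off the first term of a weighted sum. *)
lemma weighted_sum_Suc:
  fixes f :: "nat \<Rightarrow> 'a :: comm_ring_1"
  shows "(\<Sum>i\<le>Suc m. (if i = 0 then 1 else 2) * f i) =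
    f 0 + f 1 + (\<Sum>i\<le>m. (if i = 0 then 1 else 2) * f (Suc i))"
  by (induction m) (simp_all add: algebra_simps)

(* Prime-power case of the first identity with x in place of p: the sum over i of
   2^omega(p^i) * p^i * lambda(p^i) * sigma2(p^(k-i)) equals beta(p^k)^2. *)
lemma weighted_sum_alt_square:
  fixes x :: "'a :: idom"
  assumes x: "x ^ 2 \<noteq> 1"
  shows "(\<Sum>i\<le>k. (if i = 0 then 1 else 2) * ((- x) ^ i * geom_sum (x ^ 2) (k - i))) =
    alt_sum x k ^ 2"
proof (induction k)
  case 0
  then show ?case by (simp add: alt_sum_def geom_sum_def)
next
  case (Suc k)
  have "(\<Sum>i\<le>Suc k. (if i = 0 then 1 else 2) * ((- x) ^ i * geom_sum (x ^ 2) (Suc k - i))) =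
      geom_sum (x ^ 2) (Suc k) - x * geom_sum (x ^ 2) k
      - x * (\<Sum>i\<le>k. (if i = 0 then 1 else 2) * ((- x) ^ i * geom_sum (x ^ 2) (k - i)))"
    unfolding weighted_sum_Suc by (simp add: sum_distrib_left sum_negf algebra_simps)
  also have "\<dots> = alt_sum x (Suc k) ^ 2"
    using Suc.IH alt_sum_Suc_square[OF x] by simp
  finally show ?case .
qed

(* Prime-power case of the third identity with x in place of p: the sum over 2i <= k of
   2^omega(p^i) * p^(2i) * beta2(p^(k-2i)) equals beta(p^k) * sigma1(p^k). *)
lemma weighted_sum_alt_times_geom:
  fixes x :: "'a :: idom"
  assumes x: "x ^ 2 \<noteq> 1" "x ^ 2 \<noteq> -1"
  shows "(\<Sum>i\<le>k div 2. (if i = 0 then 1 else 2) * ((x ^ 2) ^ i * alt_sum (x ^ 2) (k - 2 * i))) =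
    alt_sum x k * geom_sum x k"
proof (induction k rule: nat_induct2)
  case 0
  then show ?case by (simp add: alt_sum_def geom_sum_def)
next
  case 1
  then show ?case by (simp add: alt_sum_def geom_sum_def algebra_simps power2_eq_square)
next
  case (step k)
  have "(k + 2) div 2 = Suc (k div 2)" by simp
  have "(\<Sum>i\<le>(k + 2) div 2. (if i = 0 then 1 else 2) * ((x ^ 2) ^ i * alt_sum (x ^ 2) (k + 2 - 2 * i))) =
      alt_sum (x ^ 2) (k + 2) + x ^ 2 * alt_sum (x ^ 2) k
      + x ^ 2 * (\<Sum>i\<le>k div 2. (if i = 0 then 1 else 2) * ((x ^ 2) ^ i * alt_sum (x ^ 2) (k - 2 * i)))"
    unfolding \<open>(k + 2) div 2 = Suc (k div 2)\<close> weighted_sum_Suc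
    by (simp add: sum_distrib_left algebra_simps)
  also have "\<dots> = alt_sum x (k + 2) * geom_sum x (k + 2)"
    using step.IH alt_sum_times_geom_sum[OF x, of k] by simp
  finally show ?case .
qed

lemma liouville_prime_power: "prime p \<Longrightarrow> liouville (p ^ i) = (-1) ^ i"
  by (simp add: liouville_def prime_factorization_prime_power)

lemma prime_factors_prime_power: "prime (p::nat) \<Longrightarrow> prime_factors (p ^ i) = (if i = 0 then {} else {p})"
  by (simp add: prime_factorization_prime_power)

lemma power_omega_prime_power:
  "prime p \<Longrightarrow> (c :: 'a :: monoid_mult) ^ omega (p ^ i) = (if i = 0 then 1 else c)"
  by (simp add: omega_def prime_factors_prime_power)

lemma moebius_prime_power:
  "prime p \<Longrightarrow> moebius (p ^ i) = (if i = 0 then 1 else if i = 1 then -1 else 0)"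
  using squarefree_power_iff[of p i] squarefree_prime[of p]
  by (auto simp: moebius_def prime_factors_prime_power prime_prime_factors)

lemma beta_eq_dconv: "beta = dconv 1 of_nat liouville"
  by (simp add: fun_eq_iff beta_def dconv_def)

lemma beta2_eq_dconv: "beta2 = dconv 1 (\<lambda>d. of_nat d ^ 2) liouville"
  by (simp add: fun_eq_iff beta2_def dconv_def)

lemma sigma1_eq_dconv: "sigma1 = dconv 1 of_nat (\<lambda>d. 1)"
  by (simp add: fun_eq_iff sigma1_def dconv_def)

lemma sigma2_eq_dconv: "sigma2 = dconv 1 (\<lambda>d. of_nat d ^ 2) (\<lambda>d. 1)"
  by (simp add: fun_eq_iff sigma2_def dconv_def)

lemma multiplicative_beta: "multiplicative beta"
  unfolding beta_eq_dconv by (simp add: dconv_multiplicative multiplicative_of_nat multiplicative_liouville)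

lemma multiplicative_beta2: "multiplicative beta2"
  unfolding beta2_eq_dconv
  by (simp add: dconv_multiplicative multiplicative_of_nat_power multiplicative_liouville)

lemma multiplicative_sigma1: "multiplicative sigma1"
  unfolding sigma1_eq_dconv by (simp add: dconv_multiplicative multiplicative_of_nat multiplicative_const_1)

lemma multiplicative_sigma2: "multiplicative sigma2"
  unfolding sigma2_eq_dconv
  by (simp add: dconv_multiplicative multiplicative_of_nat_power multiplicative_const_1)

lemma beta_prime_power: "prime p \<Longrightarrow> beta (p ^ k) = alt_sum (int p) k"
  by (simp add: beta_eq_dconv dconv_prime_power alt_sum_def liouville_prime_power)

lemma beta2_prime_power: "prime p \<Longrightarrow> beta2 (p ^ k) = alt_sum (int p ^ 2) k"
  by (simp add: beta2_eq_dconv dconv_prime_power alt_sum_def liouville_prime_power power_square_commute)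

lemma sigma1_prime_power: "prime p \<Longrightarrow> sigma1 (p ^ k) = geom_sum (int p) k"
  by (simp add: sigma1_eq_dconv dconv_prime_power geom_sum_def)

lemma sigma2_prime_power: "prime p \<Longrightarrow> sigma2 (p ^ k) = geom_sum (int p ^ 2) k"
  by (simp add: sigma2_eq_dconv dconv_prime_power geom_sum_def power_square_commute)

lemma prime_square_ne_pm1:
  assumes "prime p"
  shows "int p ^ 2 \<noteq> 1" "int p ^ 2 \<noteq> -1"
proof -
  have "(2::int) ^ 2 \<le> int p ^ 2"
    using prime_ge_2_nat[OF assms] by (intro power_mono) simp_all
  then show "int p ^ 2 \<noteq> 1" "int p ^ 2 \<noteq> -1" by auto
qed

lemma beta_square_identity:
  assumes n: "n > 0"
  shows "beta n ^ 2 = (\<Sum>d | d dvd n. int d * 2 ^ omega d * liouville d * sigma2 (n div d))"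
proof -
  define F where "F d = int d * 2 ^ omega d * liouville d" for d
  have "beta n ^ 2 = dconv 1 F sigma2 n"
  proof (rule multiplicative_eqI[OF _ _ _ n])
    show "multiplicative (\<lambda>n. beta n ^ 2)"
      using multiplicative_mult[OF multiplicative_beta multiplicative_beta] by (simp add: power2_eq_square)
    show "multiplicative (dconv 1 F sigma2)" unfolding F_def
      by (intro dconv_multiplicative multiplicative_mult multiplicative_of_nat
          multiplicative_power_omega multiplicative_liouville multiplicative_sigma2) simp
    fix p k :: nat assume p: "prime p"
    have "dconv 1 F sigma2 (p ^ k) =
        (\<Sum>i\<le>k. (if i = 0 then 1 else 2) * ((- int p) ^ i * geom_sum (int p ^ 2) (k - i)))"
      unfolding dconv_prime_power[OF p zero_less_one]
      by (intro sum.cong) (auto simp: F_def power_omega_prime_power[OF p] liouville_prime_power[OF p]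
          sigma2_prime_power[OF p] power_minus')
    also have "\<dots> = beta (p ^ k) ^ 2"
      using weighted_sum_alt_square[OF prime_square_ne_pm1(1)[OF p]] beta_prime_power[OF p] by simp
    finally show "beta (p ^ k) ^ 2 = dconv 1 F sigma2 (p ^ k)" ..
  qed
  then show ?thesis by (simp add: dconv_def F_def)
qed

lemma beta_of_square_identity:
  assumes n: "n > 0"
  shows "beta (n ^ 2) = (\<Sum>d | d dvd n. int d * moebius d * sigma2 (n div d))"
proof -
  define F where "F d = int d * moebius d" for d
  have "beta (n ^ 2) = dconv 1 F sigma2 n"
  proof (rule multiplicative_eqI[OF _ _ _ n])
    show "multiplicative (\<lambda>n. beta (n ^ 2))"
      by (rule multiplicative_compose_power[OF multiplicative_beta])
    show "multiplicative (dconv 1 F sigma2)" unfolding F_def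
      by (intro dconv_multiplicative multiplicative_mult multiplicative_of_nat
          multiplicative_moebius multiplicative_sigma2) simp
    fix p k :: nat assume p: "prime p" and "k > 0"
    then obtain m where k: "k = Suc m" using gr0_implies_Suc by blast
    have "dconv 1 F sigma2 (p ^ k) = (\<Sum>i\<in>{0, 1}. F (p ^ i) * sigma2 (p ^ (k - i)))"
      unfolding dconv_prime_power[OF p zero_less_one] div_by_1 mult_1
      by (intro sum.mono_neutral_right) (auto simp: k F_def moebius_prime_power[OF p])
    also have "\<dots> = geom_sum (int p ^ 2) (Suc m) - int p * geom_sum (int p ^ 2) m"
      by (simp add: k F_def moebius_prime_power[OF p] sigma2_prime_power[OF p])
    also have "\<dots> = beta (p ^ (2 * Suc m))"
      by (simp only: alt_sum_even[OF prime_square_ne_pm1(1)[OF p]] beta_prime_power[OF p])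
    also have "p ^ (2 * Suc m) = (p ^ k) ^ 2"
      by (simp only: k power_mult[symmetric] mult.commute)
    finally show "beta ((p ^ k) ^ 2) = dconv 1 F sigma2 (p ^ k)" ..
  qed
  then show ?thesis by (simp add: dconv_def F_def)
qed

lemma beta_times_sigma1_identity:
  assumes n: "n > 0"
  shows "beta n * sigma1 n = (\<Sum>d | d ^ 2 dvd n. int d ^ 2 * 2 ^ omega d * beta2 (n div d ^ 2))"
proof -
  define F where "F d = int d ^ 2 * 2 ^ omega d" for d
  have "beta n * sigma1 n = dconv 2 F beta2 n"
  proof (rule multiplicative_eqI[OF _ _ _ n])
    show "multiplicative (\<lambda>n. beta n * sigma1 n)"
      by (rule multiplicative_mult[OF multiplicative_beta multiplicative_sigma1])
    show "multiplicative (dconv 2 F beta2)" unfolding F_def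
      by (intro dconv_multiplicative multiplicative_mult multiplicative_of_nat_power
          multiplicative_power_omega multiplicative_beta2) simp
    fix p k :: nat assume p: "prime p"
    have "dconv 2 F beta2 (p ^ k) = (\<Sum>i\<le>k div 2. (if i = 0 then 1 else 2) *
        ((int p ^ 2) ^ i * alt_sum (int p ^ 2) (k - 2 * i)))"
      unfolding dconv_prime_power[OF p pos2]
      by (intro sum.cong) (auto simp: F_def power_omega_prime_power[OF p] beta2_prime_power[OF p]
          power_square_commute)
    also have "\<dots> = beta (p ^ k) * sigma1 (p ^ k)"
      using weighted_sum_alt_times_geom[OF prime_square_ne_pm1[OF p]]
      by (simp add: beta_prime_power[OF p] sigma1_prime_power[OF p])
    finally show "beta (p ^ k) * sigma1 (p ^ k) = dconv 2 F beta2 (p ^ k)" ..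
  qed
  then show ?thesis by (simp add: dconv_def F_def)
qed

theorem mainTheorem15:
  fixes n :: nat
  assumes "n \<ge> 1"
  shows "beta n ^ 2 = (\<Sum>d | d dvd n. int d * 2 ^ omega d * liouville d * sigma2 (n div d)) \<and>
    beta (n ^ 2) = (\<Sum>d | d dvd n. int d * moebius d * sigma2 (n div d)) \<and>
    beta n * sigma1 n = (\<Sum>d | d ^ 2 dvd n. int d ^ 2 * 2 ^ omega d * beta2 (n div d ^ 2))"
proof -
  have "n > 0" using assms by simp
  then show ?thesis
    using beta_square_identity beta_of_square_identity beta_times_sigma1_identity by blast
qed

end
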